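(* Let $\mathcal T,\Omega>0$ and $N_1,N_2\in\mathbb N$, and set $L_1:=2N_1+1$, $L_2:=2N_2+1$. Let $$w(x)=\sum_{k=-N_1}^{N_1}w_k\,\mathrm e^{2\pi i\frac{\Omega kx}{L_1}},\qquad x\in\mathbb R,$$ with $w_k\in\mathbb C$, be an $\frac{L_1}{\Omega}$-periodic trigonometric polynomial. Then for all $\tau,\nu\in\mathbb R$ and all $x_j=\frac{\mathcal T j}{L_2}$, $j=-N_2,\dots,N_2$, $$\mathrm e^{2\pi i\nu x_j}\,w(x_j-\tau)=\sum_{u=-N_1}^{N_1}\sum_{v=-N_2}^{N_2}\mathrm e^{2\pi i\frac{x_jv}{\mathcal T}}\,w\Big(x_j-\frac{u}{\Omega}\Big)\,a(\tau,\nu)_{(u,v)},$$ where $$a(\tau,\nu)_{(u,v)}:=\frac{1}{L_1L_2}\,D_{N_1}\Big(\frac{u-\Omega\tau}{L_1}\Big)\,D_{N_2}\Big(\frac{v-\mathcal T\nu}{L_2}\Big),\qquad u=-N_1,\dots,N_1,\ v=-N_2,\dots,N_2.$$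
   Context: For $N\in\mathbb N$, $D_N(x)=\sum_{k=-N}^{N}\mathrm e^{2\pi ikx}$ is the $N$th Dirichlet kernel. The left-hand side is $(M_\nu T_\tau w)(x_j)$, where $T_\tau f(x)=f(x-\tau)$ and $M_\nu f(x)=f(x)\mathrm e^{2\pi i\nu x}$. *)

theory Defs
  imports "HOL-Analysis.Analysis"
begin

definition dirichlet_kernel :: "nat \<Rightarrow> real \<Rightarrow> complex" where
  "dirichlet_kernel N x = (\<Sum>k\<in>{-int N..int N}. cis (2 * pi * of_int k * x))"

definition trig_poly :: "real \<Rightarrow> nat \<Rightarrow> (int \<Rightarrow> complex) \<Rightarrow> real \<Rightarrow> complex" where
  "trig_poly \<Omega> N1 c x =
     (\<Sum>k\<in>{-int N1..int N1}. c k * cis (2 * pi * \<Omega> * of_int k * x / real (2 * N1 + 1)))"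

definition spread_coeff ::
  "real \<Rightarrow> real \<Rightarrow> nat \<Rightarrow> nat \<Rightarrow> real \<Rightarrow> real \<Rightarrow> int \<Rightarrow> int \<Rightarrow> complex" where
  "spread_coeff T \<Omega> N1 N2 \<tau> \<nu> u v =
     (1 / (of_nat (2 * N1 + 1) * of_nat (2 * N2 + 1))) *
     dirichlet_kernel N1 ((of_int u - \<Omega> * \<tau>) / real (2 * N1 + 1)) *
     dirichlet_kernel N2 ((of_int v - T * \<nu>) / real (2 * N2 + 1))"

end

theory Submission
  imports Defs "HOL-Library.Real_Mod"
begin

text \<open>Since the coefficients factor, the double sum is the product of a sum over u and a
  sum over v, and each factor is an instance of one discrete reproducing identity: if p is a
  trigonometric polynomial of degree N and period L = 2N+1, then sampling p at the L integers
  -N..N and weighting with the Dirichlet kernel reproduces L p(s - t) for every real shift t.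
  This holds because the characters e^{2 pi i k u/L}, |k| <= N, are orthogonal over the
  sample points. For the sum over u the polynomial is w, rescaled by Omega; for the sum over v
  it is the single character v |-> e^{2 pi i j v/L2}, which is where the assumption that x is
  a grid point x_j enters.\<close>

definition trig_sum :: "nat \<Rightarrow> (int \<Rightarrow> complex) \<Rightarrow> real \<Rightarrow> complex" where
  "trig_sum N a y = (\<Sum>k\<in>{-int N..int N}. a k * cis (2 * pi * of_int k * y / real (2 * N + 1)))"

lemma cis_2pi_fraction_eq_1_iff:
  fixes L :: nat and d :: int
  assumes "L > 0"
  shows "cis (2 * pi * of_int d / real L) = 1 \<longleftrightarrow> int L dvd d"
proof
  assume "cis (2 * pi * of_int d / real L) = 1"
  then obtain n :: int where "2 * pi * of_int d / real L = of_int n * (2 * pi)"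
    unfolding cis_eq_1_iff by blast
  hence "real_of_int d = real_of_int (int L * n)"
    using assms by (simp add: field_simps)
  thus "int L dvd d" by (simp only: of_int_eq_iff) simp
next
  assume "int L dvd d"
  then obtain n where "d = int L * n" by blast
  hence "2 * pi * of_int d / real L = 2 * pi * of_int n"
    using assms by simp
  thus "cis (2 * pi * of_int d / real L) = 1" by simp
qed

lemma sum_cis_over_period:
  fixes N :: nat and d :: int
  defines "L \<equiv> 2 * N + 1"
  shows "(\<Sum>u\<in>{-int N..int N}. cis (2 * pi * of_int d * of_int u / real L)) =
         (if int L dvd d then of_nat L else 0)"
proof (cases "int L dvd d")
  case True
  have "cis (2 * pi * of_int d * of_int u / real L) = 1" for u :: int
    using cis_2pi_fraction_eq_1_iff[of L "d * u"] True by (simp add: L_def mult.assoc)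
  with True show ?thesis by (simp add: L_def)
next
  case False
  have L_pos: "real L > 0" by (simp add: L_def)
  define z where "z = cis (2 * pi * of_int d / real L)"
  have "z \<noteq> 1"
    using cis_2pi_fraction_eq_1_iff[of L d] False by (simp add: z_def L_def)
  moreover have "z ^ L = 1"
    unfolding z_def Complex.DeMoivre by (simp add: L_def)
  ultimately have geometric: "(\<Sum>n<L. z ^ n) = 0"
    by (simp add: sum_gp_strict)
  have "(\<Sum>u\<in>{-int N..int N}. cis (2 * pi * of_int d * of_int u / real L)) =
        (\<Sum>n<L. cis (2 * pi * of_int d * of_int (int n - int N) / real L))"
    by (rule sum.reindex_bij_witness[of _ "\<lambda>n. int n - int N" "\<lambda>u. nat (u + int N)"])
       (auto simp: L_def)
  also have "\<dots> = (\<Sum>n<L. cis (- 2 * pi * of_int d * of_int N / real L) * z ^ n)"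
    unfolding z_def Complex.DeMoivre cis_mult using L_pos
    by (intro sum.cong refl arg_cong[where f = cis]) (simp add: field_simps)
  also have "\<dots> = 0"
    by (simp add: geometric flip: sum_distrib_left)
  finally show ?thesis using False by simp
qed

lemma sum_cis_orthogonal:
  fixes N :: nat and k m :: int
  assumes "k \<in> {-int N..int N}" and "m \<in> {-int N..int N}"
  shows "(\<Sum>u\<in>{-int N..int N}. cis (2 * pi * of_int (m - k) * of_int u / real (2 * N + 1))) =
         (if m = k then of_nat (2 * N + 1) else 0)"
proof -
  have "int (2 * N + 1) dvd m - k \<longleftrightarrow> m = k"
  proof
    assume dvd: "int (2 * N + 1) dvd m - k"
    show "m = k"
    proof (rule ccontr)
      assume "m \<noteq> k"
      with dvd have "int (2 * N + 1) \<le> \<bar>m - k\<bar>"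
        using dvd_imp_le_int[of "m - k" "int (2 * N + 1)"] by simp
      with assms show False by auto
    qed
  qed simp
  thus ?thesis by (simp only: sum_cis_over_period)
qed

lemma dirichlet_kernel_reproduces_trig_sum:
  fixes N :: nat and a :: "int \<Rightarrow> complex" and s t :: real
  shows "(\<Sum>u\<in>{-int N..int N}. trig_sum N a (s - of_int u) *
            dirichlet_kernel N ((of_int u - t) / real (2 * N + 1))) =
         of_nat (2 * N + 1) * trig_sum N a (s - t)"
proof -
  define I where "I = {-int N..int N}"
  define L where "L = real (2 * N + 1)"
  have L_pos: "L > 0" unfolding L_def by simp
  define e where "e k m = a k * cis (2 * pi * (of_int k * s - of_int m * t) / L)" for k m
  have "(\<Sum>u\<in>I. trig_sum N a (s - of_int u) * dirichlet_kernel N ((of_int u - t) / L)) =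
        (\<Sum>u\<in>I. \<Sum>k\<in>I. \<Sum>m\<in>I. e k m * cis (2 * pi * of_int (m - k) * of_int u / L))"
    unfolding trig_sum_def dirichlet_kernel_def sum_product L_def[symmetric] I_def[symmetric]
  proof (intro sum.cong refl)
    fix u k m
    show "a k * cis (2 * pi * of_int k * (s - of_int u) / L) * cis (2 * pi * of_int m * ((of_int u - t) / L)) =
          e k m * cis (2 * pi * of_int (m - k) * of_int u / L)"
      unfolding e_def mult.assoc cis_mult using L_pos
      by (intro arg_cong[where f = "\<lambda>y. a k * cis y"]) (simp add: field_simps)
  qed
  also have "\<dots> = (\<Sum>k\<in>I. \<Sum>m\<in>I. e k m * (\<Sum>u\<in>I. cis (2 * pi * of_int (m - k) * of_int u / L)))"
  proof -
    have "(\<Sum>u\<in>I. \<Sum>k\<in>I. \<Sum>m\<in>I. e k m * cis (2 * pi * of_int (m - k) * of_int u / L)) =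
          (\<Sum>k\<in>I. \<Sum>u\<in>I. \<Sum>m\<in>I. e k m * cis (2 * pi * of_int (m - k) * of_int u / L))"
      by (rule sum.swap)
    also have "\<dots> = (\<Sum>k\<in>I. \<Sum>m\<in>I. \<Sum>u\<in>I. e k m * cis (2 * pi * of_int (m - k) * of_int u / L))"
      by (rule sum.cong[OF refl], rule sum.swap)
    finally show ?thesis by (simp only: sum_distrib_left)
  qed
  also have "\<dots> = (\<Sum>k\<in>I. \<Sum>m\<in>I. if m = k then of_nat (2 * N + 1) * e k k else 0)"
  proof (rule sum.cong[OF refl], rule sum.cong[OF refl])
    fix k m assume "k \<in> I" and "m \<in> I"
    then show "e k m * (\<Sum>u\<in>I. cis (2 * pi * of_int (m - k) * of_int u / L)) =
               (if m = k then of_nat (2 * N + 1) * e k k else 0)"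
      unfolding I_def L_def by (simp only: sum_cis_orthogonal) simp
  qed
  also have "\<dots> = of_nat (2 * N + 1) * trig_sum N a (s - t)"
    unfolding trig_sum_def sum_distrib_left e_def I_def L_def
    by (intro sum.cong refl) (simp add: right_diff_distrib mult.assoc)
  finally show ?thesis unfolding I_def L_def .
qed

lemma trig_poly_eq_trig_sum: "trig_poly \<Omega> N c x = trig_sum N c (\<Omega> * x)"
  unfolding trig_poly_def trig_sum_def by (simp add: ac_simps)

lemma trig_sum_single_frequency:
  assumes "m \<in> {-int N..int N}"
  shows "trig_sum N (\<lambda>k. if k = m then 1 else 0) y = cis (2 * pi * of_int m * y / real (2 * N + 1))"
proof -
  have "trig_sum N (\<lambda>k. if k = m then 1 else 0) y =
        (\<Sum>k\<in>{-int N..int N}. if k = m then cis (2 * pi * of_int m * y / real (2 * N + 1)) else 0)"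
    unfolding trig_sum_def by (rule sum.cong) auto
  with assms show ?thesis by simp
qed

lemma dirichlet_kernel_reproduces_trig_poly:
  assumes "\<Omega> \<noteq> 0"
  shows "(\<Sum>u\<in>{-int N..int N}. trig_poly \<Omega> N c (x - of_int u / \<Omega>) *
            dirichlet_kernel N ((of_int u - \<Omega> * \<tau>) / real (2 * N + 1))) =
         of_nat (2 * N + 1) * trig_poly \<Omega> N c (x - \<tau>)"
  using dirichlet_kernel_reproduces_trig_sum[of N c "\<Omega> * x" "\<Omega> * \<tau>"] assms
  by (simp add: trig_poly_eq_trig_sum right_diff_distrib)

lemma dirichlet_kernel_reproduces_cis:
  assumes "j \<in> {-int N..int N}"
  shows "(\<Sum>v\<in>{-int N..int N}. cis (2 * pi * of_int j * of_int v / real (2 * N + 1)) *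
            dirichlet_kernel N ((of_int v - t) / real (2 * N + 1))) =
         of_nat (2 * N + 1) * cis (2 * pi * of_int j * t / real (2 * N + 1))"
proof -
  define \<delta> :: "int \<Rightarrow> complex" where "\<delta> k = (if k = - j then 1 else 0)" for k
  have character: "trig_sum N \<delta> (0 - y) = cis (2 * pi * of_int j * y / real (2 * N + 1))" for y
    unfolding \<delta>_def using assms by (subst trig_sum_single_frequency) auto
  show ?thesis
    using dirichlet_kernel_reproduces_trig_sum[of N \<delta> 0 t] unfolding character .
qed

theorem theorem3:
  fixes T \<Omega> \<tau> \<nu> :: real and N1 N2 :: nat and c :: "int \<Rightarrow> complex" and j :: int
  assumes "T > 0" and "\<Omega> > 0"
    and "- int N2 \<le> j" and "j \<le> int N2"
  defines "x \<equiv> T * of_int j / real (2 * N2 + 1)"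
  shows "cis (2 * pi * \<nu> * x) * trig_poly \<Omega> N1 c (x - \<tau>) =
    (\<Sum>u\<in>{-int N1..int N1}. \<Sum>v\<in>{-int N2..int N2}.
       cis (2 * pi * x * of_int v / T) * trig_poly \<Omega> N1 c (x - of_int u / \<Omega>) *
       spread_coeff T \<Omega> N1 N2 \<tau> \<nu> u v)"
proof -
  have time_shifts: "(\<Sum>u\<in>{-int N1..int N1}. trig_poly \<Omega> N1 c (x - of_int u / \<Omega>) *
      dirichlet_kernel N1 ((of_int u - \<Omega> * \<tau>) / real (2 * N1 + 1))) =
      of_nat (2 * N1 + 1) * trig_poly \<Omega> N1 c (x - \<tau>)" (is "?A = _")
    using \<open>\<Omega> > 0\<close> by (intro dirichlet_kernel_reproduces_trig_poly) simp
  have on_grid: "2 * pi * x * of_int v / T = 2 * pi * of_int j * of_int v / real (2 * N2 + 1)"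
    for v :: int
    using \<open>T > 0\<close> by (simp add: x_def)
  have frequency_shifts: "(\<Sum>v\<in>{-int N2..int N2}. cis (2 * pi * x * of_int v / T) *
      dirichlet_kernel N2 ((of_int v - T * \<nu>) / real (2 * N2 + 1))) =
      of_nat (2 * N2 + 1) * cis (2 * pi * \<nu> * x)" (is "?B = _")
    using dirichlet_kernel_reproduces_cis[of j N2 "T * \<nu>"] assms(3,4)
    unfolding on_grid by (simp add: x_def mult_ac)
  have cancel: "q * p = 1 / (a * b) * ((a * p) * (b * q))" if "a \<noteq> 0" and "b \<noteq> 0"
    for a b p q :: complex
    using that by (simp add: field_simps)
  have "cis (2 * pi * \<nu> * x) * trig_poly \<Omega> N1 c (x - \<tau>) =
        1 / (of_nat (2 * N1 + 1) * of_nat (2 * N2 + 1)) * (?A * ?B)"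
    unfolding time_shifts frequency_shifts by (rule cancel) (simp_all only: of_nat_eq_0_iff)
  also have "?A * ?B = (\<Sum>u\<in>{-int N1..int N1}. \<Sum>v\<in>{-int N2..int N2}.
      trig_poly \<Omega> N1 c (x - of_int u / \<Omega>) *
      dirichlet_kernel N1 ((of_int u - \<Omega> * \<tau>) / real (2 * N1 + 1)) *
      (cis (2 * pi * x * of_int v / T) *
       dirichlet_kernel N2 ((of_int v - T * \<nu>) / real (2 * N2 + 1))))"
    by (rule sum_product)
  finally show ?thesis
    unfolding spread_coeff_def sum_distrib_left by (simp only: ac_simps)
qed

end
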